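(* Let $n\ge2$, $R>0$, $0<\kappa<R$, and let $\Omega\subset\mathbb{R}^n$ be an open set satisfying property $(\mathcal{P}_{R,\kappa})$: for all $0<r<R$ and all $z\in\partial\Omega$ there exists $x_{r,z}\in\Omega^c$ with $B_{\kappa r}(x_{r,z})\subset \Omega^c\cap B_r(z)$. Then there exist $\theta=\theta(n,\kappa)\in(0,1)$ and $C=C(n,\kappa)>0$ such that \[ \big|\{0<d_\Omega<r\rho\}\cap B_\rho(z)\big|\le C r^\theta |B_\rho| \] for all $z\in\partial\Omega$, $r\in(0,1/2)$ and $\rho\in(0,2R)$.
   Context: $d_\Omega(x)=\mathrm{dist}(x,\Omega^c)$ for $x\in\mathbb{R}^n$ (so $d_\Omega=0$ on $\Omega^c$); $|\cdot|$ denotes Lebesgue measure and $B_\rho(z)$ the open ball of radius $\rho$ centered at $z$. *)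

theory Defs
  imports "HOL-Analysis.Analysis"
begin

definition d_Omega :: "'a::euclidean_space set \<Rightarrow> 'a \<Rightarrow> real" where
  "d_Omega \<Omega> x = infdist x (- \<Omega>)"

definition prop_P :: "real \<Rightarrow> real \<Rightarrow> 'a::euclidean_space set \<Rightarrow> bool" where
  "prop_P R \<kappa> \<Omega> \<longleftrightarrow>
     (\<forall>r z. 0 < r \<and> r < R \<and> z \<in> frontier \<Omega> \<longrightarrow>
        (\<exists>x \<in> - \<Omega>. ball x (\<kappa> * r) \<subseteq> (- \<Omega>) \<inter> ball z r))"

end

theory Submission
  imports Defs
begin

text \<open>
  By (P_{R,\<kappa>}) the boundary S of \<Omega> is porous: every ball centred on S of radius below R
  contains a ball of \<alpha> times its radius that misses S, where \<alpha> = min \<kappa> 1.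
  Averaging over the balls B_{s/2}(y), each of which contains such a hole whenever y lies in the
  thin tube {d_S < \<alpha>s/8}, shows that this tube fills at most a fraction 1/(1 + (\<alpha>/4)^n) of the
  tube {d_S < s}, up to enlarging the ball B_r(z) to B_{r+s}(z). Iterating from s = \<rho> down to
  widths (\<alpha>/8)^k \<rho> yields geometric decay in k, i.e. the power law r^\<theta> with
  \<theta> = log_{8/\<alpha>} (1 + (\<alpha>/4)^n). Finally, points with 0 < d_\<Omega> < r\<rho> lie in \<Omega>, hence within
  r\<rho> of its boundary.
\<close>

definition thickening :: "'a::metric_space set \<Rightarrow> real \<Rightarrow> 'a set" where
  "thickening S a = {x. infdist x S < a}"

definition porous :: "real \<Rightarrow> real \<Rightarrow> 'a::metric_space set \<Rightarrow> bool" where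
  "porous \<alpha> T S \<longleftrightarrow> (\<forall>x\<in>S. \<forall>r. 0 < r \<and> r < T \<longrightarrow> (\<exists>p. ball p (\<alpha> * r) \<subseteq> ball x r - S))"

lemma infdist_less_iff:
  assumes "A \<noteq> {}"
  shows "infdist x A < e \<longleftrightarrow> (\<exists>a\<in>A. dist x a < e)"
proof -
  have "bdd_below ((\<lambda>a. dist x a) ` A)"
    by (rule bdd_belowI[of _ 0]) auto
  then show ?thesis
    using assms by (simp add: infdist_notempty cINF_less_iff)
qed

lemma infdist_frontier_le_infdist_compl:
  fixes S :: "'a::euclidean_space set"
  assumes "x \<in> S"
  shows "infdist x (frontier S) \<le> infdist x (- S)"
proof (cases "S = UNIV")
  case False
  have "infdist x (frontier S) \<le> dist x q" if "q \<in> - S" for q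
  proof -
    have "closed_segment x q \<inter> frontier S \<noteq> {}"
      using assms that by (intro connected_Int_frontier) auto
    then obtain w where "w \<in> closed_segment x q" "w \<in> frontier S"
      by blast
    then show ?thesis
      using infdist_le[of w "frontier S" x] dist_in_closed_segment[of w x q]
      by (simp add: dist_commute)
  qed
  moreover have "- S \<noteq> {}"
    using False by auto
  ultimately show ?thesis
    unfolding infdist_notempty[OF \<open>- S \<noteq> {}\<close>] by (intro cINF_greatest) auto
qed simp

lemma open_thickening: "open (thickening S a)"
  unfolding thickening_def by (intro open_Collect_less continuous_intros)

lemma thickening_mono: "a \<le> b \<Longrightarrow> thickening S a \<subseteq> thickening S b"
  unfolding thickening_def by auto

lemma fmeasurable_lborel_ball: "ball (z::'a::euclidean_space) r \<in> fmeasurable lborel"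
  using emeasure_lborel_ball_finite[of z r] by (simp add: fmeasurable_def)

lemma fmeasurable_Int_ball:
  fixes X :: "'a::euclidean_space set"
  assumes "X \<in> sets borel"
  shows "X \<inter> ball z r \<in> fmeasurable lborel"
  using fmeasurable_Int_fmeasurable[OF fmeasurable_lborel_ball, of X z r] assms by (simp add: Int_commute)

lemma fmeasurable_thickening_Int_ball:
  fixes z :: "'a::euclidean_space"
  shows "thickening S a \<inter> ball z r \<in> fmeasurable lborel"
  by (intro fmeasurable_Int_ball borel_open open_thickening)

lemma measure_thickening_Int_ball_mono:
  fixes z :: "'a::euclidean_space"
  assumes "a \<le> a'" "r \<le> r'"
  shows "measure lborel (thickening S a \<inter> ball z r) \<le> measure lborel (thickening S a' \<inter> ball z r')"
proof (rule measure_mono_fmeasurable)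
  show "thickening S a \<inter> ball z r \<subseteq> thickening S a' \<inter> ball z r'"
    using assms thickening_mono[OF assms(1)] by auto
  show "thickening S a \<inter> ball z r \<in> sets lborel"
    using fmeasurable_thickening_Int_ball by (rule fmeasurableD)
qed (rule fmeasurable_thickening_Int_ball)

lemma content_ball_mult:
  fixes x :: "'a::euclidean_space"
  assumes "0 \<le> a" "0 \<le> t"
  shows "measure lborel (ball x (a * t)) = a ^ DIM('a) * measure lborel (ball (0::'a) t)"
proof -
  have "measure lborel (ball x (a * t)) = (a * t) ^ DIM('a) * measure lborel (ball (0::'a) 1)"
    using assms by (intro content_ball_conv_unit_ball) simp
  also have "\<dots> = a ^ DIM('a) * (t ^ DIM('a) * measure lborel (ball (0::'a) 1))"
    by (simp add: power_mult_distrib)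
  also have "t ^ DIM('a) * measure lborel (ball (0::'a) 1) = measure lborel (ball (0::'a) t)"
    using assms by (intro content_ball_conv_unit_ball[symmetric])
  finally show ?thesis .
qed

lemma emeasure_lborel_ball:
  fixes x :: "'a::euclidean_space"
  shows "emeasure lborel (ball x t) = ennreal (measure lborel (ball (0::'a) t))"
proof (cases "0 \<le> t")
  case True
  then have "measure lborel (ball x t) = measure lborel (ball (0::'a) t)"
    using content_ball_mult[of 1 t x] by simp
  then show ?thesis
    using emeasure_lborel_ball_finite[of x t] by (simp add: emeasure_eq_ennreal_measure)
qed (simp add: ball_empty)

lemma nn_integral_emeasure_Int_ball:
  fixes A :: "'a::euclidean_space set"
  assumes A: "A \<in> sets borel"
  shows "(\<lambda>y. emeasure lborel (A \<inter> ball y t)) \<in> borel_measurable lborel"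
    and "(\<integral>\<^sup>+y. emeasure lborel (A \<inter> ball y t) \<partial>lborel)
           = emeasure lborel A * emeasure lborel (ball (0::'a) t)"
proof -
  define Q where "Q = (UNIV \<times> A) \<inter> {p::'a \<times> 'a. dist (fst p) (snd p) < t}"
  have "{p::'a \<times> 'a. dist (fst p) (snd p) < t} \<in> sets (lborel \<Otimes>\<^sub>M lborel)"
    unfolding sets_pair_measure_cong[OF sets_lborel sets_lborel] borel_prod
    by (intro borel_open open_Collect_less continuous_intros)
  then have Q: "Q \<in> sets (lborel \<Otimes>\<^sub>M lborel)"
    unfolding Q_def using A by (intro sets.Int pair_measureI) auto
  have row: "Pair y -` Q = A \<inter> ball y t" for y
    by (auto simp: Q_def)
  have column: "(\<lambda>y. (y, x)) -` Q = (if x \<in> A then ball x t else {})" for x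
    by (auto simp: Q_def dist_commute)
  show "(\<lambda>y. emeasure lborel (A \<inter> ball y t)) \<in> borel_measurable lborel"
    using lborel.measurable_emeasure_Pair[OF Q] by (simp add: row)
  have "(\<integral>\<^sup>+y. emeasure lborel (A \<inter> ball y t) \<partial>lborel) = emeasure (lborel \<Otimes>\<^sub>M lborel) Q"
    using lborel.emeasure_pair_measure_alt[OF Q] by (simp add: row)
  also have "\<dots> = (\<integral>\<^sup>+x. emeasure lborel (if x \<in> A then ball x t else {}) \<partial>lborel)"
    using lborel_pair.emeasure_pair_measure_alt2[OF Q] by (simp only: column)
  also have "\<dots> = (\<integral>\<^sup>+x. emeasure lborel (ball (0::'a) t) * indicator A x \<partial>lborel)"
    by (intro nn_integral_cong) (simp add: emeasure_lborel_ball)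
  also have "\<dots> = emeasure lborel A * emeasure lborel (ball (0::'a) t)"
    using A by (subst nn_integral_cmult_indicator) (simp_all add: mult.commute)
  finally show "(\<integral>\<^sup>+y. emeasure lborel (A \<inter> ball y t) \<partial>lborel)
           = emeasure lborel A * emeasure lborel (ball (0::'a) t)" .
qed

lemma emeasure_Int_ball_add_hole_le:
  fixes A Y :: "'a::euclidean_space set"
  assumes A: "A \<in> sets borel" and "0 < t"
    and hole: "\<And>a. a \<in> A \<Longrightarrow> \<exists>p. ball p h \<subseteq> ball a t - A"
    and near: "\<And>a y. a \<in> A \<Longrightarrow> dist a y < t \<Longrightarrow> y \<in> Y"
  shows "emeasure lborel (A \<inter> ball y t) + emeasure lborel (ball (0::'a) h) * indicator A y
           \<le> emeasure lborel (ball (0::'a) t) * indicator Y y"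
proof (cases "y \<in> A")
  case True
  obtain p where p: "ball p h \<subseteq> ball y t - A"
    using hole[OF True] by blast
  have "emeasure lborel (A \<inter> ball y t) + emeasure lborel (ball (0::'a) h)
      = emeasure lborel (A \<inter> ball y t) + emeasure lborel (ball p h)"
    by (simp add: emeasure_lborel_ball)
  also have "\<dots> = emeasure lborel ((A \<inter> ball y t) \<union> ball p h)"
    using A p by (intro plus_emeasure) auto
  also have "\<dots> \<le> emeasure lborel (ball y t)"
    using p by (intro emeasure_mono) auto
  also have "\<dots> = emeasure lborel (ball (0::'a) t)"
    by (simp add: emeasure_lborel_ball)
  finally show ?thesis
    using True near[OF True, of y] \<open>0 < t\<close> by simp
next
  case False
  show ?thesis
  proof (cases "A \<inter> ball y t = {}")
    case False
    then obtain a where "a \<in> A" "dist a y < t"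
      by (auto simp: dist_commute)
    then have "y \<in> Y"
      by (rule near)
    have "emeasure lborel (A \<inter> ball y t) \<le> emeasure lborel (ball y t)"
      by (intro emeasure_mono) auto
    then show ?thesis
      using \<open>y \<notin> A\<close> \<open>y \<in> Y\<close> by (simp add: emeasure_lborel_ball)
  qed (simp add: \<open>y \<notin> A\<close>)
qed

text \<open>
  Integrating |A \<inter> B_t(y)| over y gives |A| |B_t| by Fubini, while every ball centred in A
  misses a hole of measure |B_h| and every ball meeting A is centred in Y.
\<close>
lemma measure_growth_from_holes:
  fixes A Y :: "'a::euclidean_space set"
  assumes A: "A \<in> sets borel" and Y: "Y \<in> fmeasurable lborel" and "0 < t" "0 \<le> h"
    and hole: "\<And>a. a \<in> A \<Longrightarrow> \<exists>p. ball p h \<subseteq> ball a t - A"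
    and near: "\<And>a y. a \<in> A \<Longrightarrow> dist a y < t \<Longrightarrow> y \<in> Y"
  shows "(1 + (h / t) ^ DIM('a)) * measure lborel A \<le> measure lborel Y"
proof -
  define m where "m = measure lborel (ball (0::'a) t)"
  have "0 < m"
    unfolding m_def using \<open>0 < t\<close> by (rule content_ball_pos)
  have hole_measure: "measure lborel (ball (0::'a) h) = (h / t) ^ DIM('a) * m"
    using content_ball_mult[of "h / t" t 0] \<open>0 < t\<close> \<open>0 \<le> h\<close> unfolding m_def by simp
  have "A \<subseteq> Y"
  proof
    fix a assume "a \<in> A"
    then show "a \<in> Y"
      using near[of a a] \<open>0 < t\<close> by simp
  qed
  then have A_fin: "A \<in> fmeasurable lborel"
    using A by (intro fmeasurableI2[OF Y]) simp_all
  note F = nn_integral_emeasure_Int_ball[OF A, of t]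
  have "emeasure lborel A * emeasure lborel (ball (0::'a) t) + emeasure lborel (ball (0::'a) h) * emeasure lborel A
      = (\<integral>\<^sup>+y. emeasure lborel (A \<inter> ball y t) + emeasure lborel (ball (0::'a) h) * indicator A y \<partial>lborel)"
    using A F by (subst nn_integral_add) (auto simp: nn_integral_cmult_indicator)
  also have "\<dots> \<le> (\<integral>\<^sup>+y. emeasure lborel (ball (0::'a) t) * indicator Y y \<partial>lborel)"
    by (intro nn_integral_mono emeasure_Int_ball_add_hole_le[OF A \<open>0 < t\<close> hole near])
  also have "\<dots> = emeasure lborel (ball (0::'a) t) * emeasure lborel Y"
    using Y by (subst nn_integral_cmult_indicator) (auto intro: fmeasurableD)
  finally have "ennreal (measure lborel A * m + (h / t) ^ DIM('a) * m * measure lborel A)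
      \<le> ennreal (m * measure lborel Y)"
    using \<open>0 < m\<close> \<open>0 \<le> h\<close> \<open>0 < t\<close>
    by (simp add: emeasure_lborel_ball emeasure_eq_measure2[OF A_fin] emeasure_eq_measure2[OF Y]
        hole_measure m_def[symmetric] ennreal_mult'[symmetric] ennreal_plus[symmetric] del: ennreal_plus)
  then have "m * ((1 + (h / t) ^ DIM('a)) * measure lborel A) \<le> m * measure lborel Y"
    using \<open>0 < m\<close> by (subst (asm) ennreal_le_iff) (auto simp: algebra_simps)
  then show ?thesis
    using \<open>0 < m\<close> by simp
qed

lemma porous_mono: "porous \<alpha> T S \<Longrightarrow> \<beta> \<le> \<alpha> \<Longrightarrow> porous \<beta> T S"
  unfolding porous_def by (meson dual_order.trans mult_right_mono less_imp_le subset_ball)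

lemma porous_frontier_if_prop_P:
  fixes \<Omega> :: "'a::euclidean_space set"
  assumes "prop_P R \<kappa> \<Omega>"
  shows "porous \<kappa> R (frontier \<Omega>)"
  unfolding porous_def
proof (intro ballI allI impI)
  fix z r assume "z \<in> frontier \<Omega>" "0 < r \<and> r < R"
  then obtain x where x: "ball x (\<kappa> * r) \<subseteq> - \<Omega> \<inter> ball z r"
    using assms unfolding prop_P_def by blast
  then have "ball x (\<kappa> * r) \<subseteq> interior (- \<Omega>)"
    by (intro interior_maximal) auto
  then have "ball x (\<kappa> * r) \<inter> frontier \<Omega> = {}"
    by (auto simp: interior_complement frontier_def)
  then show "\<exists>p. ball p (\<kappa> * r) \<subseteq> ball z r - frontier \<Omega>"
    using x by blast
qed

lemma porous_hole_near:
  assumes "porous \<alpha> T S" "S \<noteq> {}" "0 < t" "t < 2 * T" "infdist y S < t / 2"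
  shows "\<exists>p. ball p (\<alpha> * t / 4) \<subseteq> ball y t - thickening S (\<alpha> * t / 4)"
proof -
  obtain w where w: "w \<in> S" "dist y w < t / 2"
    using assms(2,5) infdist_less_iff by blast
  moreover have "0 < t / 2" "t / 2 < T"
    using assms(3,4) by simp_all
  ultimately obtain p where p: "ball p (\<alpha> * (t / 2)) \<subseteq> ball w (t / 2) - S"
    using assms(1) unfolding porous_def by blast
  have "q \<in> ball y t - thickening S (\<alpha> * t / 4)" if q: "q \<in> ball p (\<alpha> * t / 4)" for q
  proof
    have "0 < \<alpha> * t / 4"
      using q le_less_trans[OF zero_le_dist] by (simp only: mem_ball)
    then have "0 < \<alpha>"
      using \<open>0 < t\<close> by (simp add: zero_less_mult_iff)
    then have "ball p (\<alpha> * t / 4) \<subseteq> ball p (\<alpha> * (t / 2))"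
      using \<open>0 < t\<close> by (intro subset_ball) simp
    then have "q \<in> ball p (\<alpha> * (t / 2))"
      using q by blast
    then show "q \<in> ball y t"
      using p w(2) dist_triangle[of y q w] by (auto simp: dist_commute)
    show "q \<notin> thickening S (\<alpha> * t / 4)"
    proof
      assume "q \<in> thickening S (\<alpha> * t / 4)"
      then obtain s where "s \<in> S" "dist q s < \<alpha> * t / 4"
        using infdist_less_iff[OF assms(2)] unfolding thickening_def by blast
      then have "s \<in> ball p (\<alpha> * (t / 2))"
        using q dist_triangle[of p s q] by (simp add: dist_commute)
      then show False
        using p \<open>s \<in> S\<close> by blast
    qed
  qed
  then show ?thesis
    by blast
qed

lemma measure_thickening_growth:
  fixes S :: "'a::euclidean_space set"
  assumes "porous \<alpha> T S" "S \<noteq> {}" "0 < \<alpha>" "\<alpha> \<le> 1" "0 < s" "s < 4 * T"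
  shows "(1 + (\<alpha> / 4) ^ DIM('a)) * measure lborel (thickening S (\<alpha> / 8 * s) \<inter> ball z r)
           \<le> measure lborel (thickening S s \<inter> ball z (r + s))"
proof -
  define A where "A = thickening S (\<alpha> / 8 * s) \<inter> ball z r"
  have "\<alpha> / 8 * s \<le> s / 4"
    using mult_left_le_one_le[of s \<alpha>] assms(3-5) by linarith
  have "(1 + (\<alpha> * (s / 2) / 4 / (s / 2)) ^ DIM('a)) * measure lborel A
          \<le> measure lborel (thickening S s \<inter> ball z (r + s))"
  proof (rule measure_growth_from_holes)
    show "A \<in> sets borel"
      unfolding A_def by (intro borel_open open_Int open_thickening open_ball)
    show "thickening S s \<inter> ball z (r + s) \<in> fmeasurable lborel"
      by (rule fmeasurable_thickening_Int_ball)
    show "0 < s / 2" "0 \<le> \<alpha> * (s / 2) / 4"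
      using assms(3,5) by simp_all
  next
    fix a assume "a \<in> A"
    then have "infdist a S < s / 2 / 2"
      using \<open>\<alpha> / 8 * s \<le> s / 4\<close> by (auto simp: A_def thickening_def)
    then obtain p where "ball p (\<alpha> * (s / 2) / 4) \<subseteq> ball a (s / 2) - thickening S (\<alpha> * (s / 2) / 4)"
      using porous_hole_near[OF assms(1,2), of "s / 2" a] assms(5,6) by auto
    moreover have "A \<subseteq> thickening S (\<alpha> * (s / 2) / 4)"
      by (auto simp: A_def thickening_def)
    ultimately show "\<exists>p. ball p (\<alpha> * (s / 2) / 4) \<subseteq> ball a (s / 2) - A"
      by blast
  next
    fix a y assume "a \<in> A" "dist a y < s / 2"
    then have "infdist a S < \<alpha> / 8 * s" "dist z a < r"
      by (auto simp: A_def thickening_def)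
    moreover have "infdist y S \<le> infdist a S + dist a y" "dist z y \<le> dist z a + dist a y"
      using infdist_triangle[of y S a] dist_triangle[of z y a] by (simp_all add: dist_commute)
    ultimately have "infdist y S < s" "dist z y < r + s"
      using \<open>\<alpha> / 8 * s \<le> s / 4\<close> \<open>dist a y < s / 2\<close> assms(5) by linarith+
    then show "y \<in> thickening S s \<inter> ball z (r + s)"
      by (simp add: thickening_def)
  qed
  then show ?thesis
    using assms(5) by (simp add: A_def)
qed

lemma measure_thickening_decay:
  fixes S :: "'a::euclidean_space set"
  assumes "porous \<alpha> T S" "S \<noteq> {}" "0 < \<alpha>" "\<alpha> \<le> 1"
  shows "0 < s \<Longrightarrow> s < 4 * T \<Longrightarrow>
    (1 + (\<alpha> / 4) ^ DIM('a)) ^ k * measure lborel (thickening S ((\<alpha> / 8) ^ k * s) \<inter> ball z r)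
      \<le> measure lborel (thickening S s \<inter> ball z (r + 2 * s))"
proof (induction k arbitrary: s r)
  case 0
  then show ?case
    by (simp add: measure_thickening_Int_ball_mono)
next
  case (Suc k)
  let ?q = "1 + (\<alpha> / 4) ^ DIM('a)" and ?l = "\<alpha> / 8"
  let ?u = "\<lambda>a b. measure lborel (thickening S a \<inter> ball z b)"
  have "?l * s \<le> s"
    using assms(3,4) Suc.prems by (intro mult_left_le_one_le) auto
  then have "?l * s < 4 * T"
    using Suc.prems by linarith
  moreover have "0 < ?l * s"
    using assms(3) Suc.prems by simp
  ultimately have IH: "?q ^ k * ?u (?l ^ k * (?l * s)) r \<le> ?u (?l * s) (r + 2 * (?l * s))"
    by (intro Suc.IH)
  have "?q ^ Suc k * ?u (?l ^ Suc k * s) r = ?q * (?q ^ k * ?u (?l ^ k * (?l * s)) r)"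
    unfolding power_Suc2[of ?l] power_Suc[of ?q] by (simp only: mult.assoc)
  also have "\<dots> \<le> ?q * ?u (?l * s) (r + 2 * (?l * s))"
    using IH assms(3) by (intro mult_left_mono) simp_all
  also have "\<dots> \<le> ?u s (r + 2 * (?l * s) + s)"
    by (rule measure_thickening_growth[OF assms Suc.prems])
  also have "\<dots> \<le> ?u s (r + 2 * s)"
    using assms(4) Suc.prems by (intro measure_thickening_Int_ball_mono) auto
  finally show ?case .
qed

lemma power_law_of_geometric_decay:
  fixes l q r f M :: real
  assumes "0 < l" "l < 1" "1 \<le> q" "0 < r" "r \<le> 1" "0 \<le> M"
    and decay: "\<And>k. r \<le> l ^ k \<Longrightarrow> q ^ k * f \<le> M"
  shows "f \<le> q * r powr log (1 / l) q * M"
proof -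
  define \<theta> where "\<theta> = log (1 / l) q"
  obtain n where "l ^ n < r"
    using real_arch_pow_inv[OF assms(4,2)] by blast
  then obtain k where "r \<le> l ^ k" "l ^ Suc k < r"
    using ex_least_nat_less[of "\<lambda>n. l ^ n < r" n] assms(5) by (auto simp: not_less)
  have "0 \<le> \<theta>"
    using assms(1-3) by (simp add: \<theta>_def)
  have "(1 / l) powr \<theta> = q"
    unfolding \<theta>_def using assms(1-3) by (intro powr_log_cancel) auto
  then have "l powr \<theta> = inverse q"
    by (auto simp: powr_divide field_simps)
  moreover have "(l ^ Suc k) powr \<theta> = (l powr \<theta>) ^ Suc k"
    using assms(1) by (simp only: powr_realpow[symmetric] powr_powr powr_power[of l] less_irrefl)
  ultimately have "inverse q ^ Suc k = (l ^ Suc k) powr \<theta>"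
    by simp
  also have "\<dots> \<le> r powr \<theta>"
    using \<open>0 \<le> \<theta>\<close> \<open>l ^ Suc k < r\<close> assms(1) by (intro powr_mono2) auto
  finally have "1 \<le> q ^ k * (q * r powr \<theta>)"
    using assms(3) by (simp add: field_simps)
  have "q ^ k * f \<le> M"
    using \<open>r \<le> l ^ k\<close> by (rule decay)
  also have "\<dots> \<le> q ^ k * (q * r powr \<theta>) * M"
    using mult_right_mono[OF \<open>1 \<le> q ^ k * (q * r powr \<theta>)\<close> assms(6)] by simp
  finally have "q ^ k * f \<le> q ^ k * (q * r powr \<theta> * M)"
    by (simp only: mult.assoc)
  then show ?thesis
    using assms(3) by (simp add: \<theta>_def)
qed

lemma measure_thickening_Int_ball_power_law:
  fixes S :: "'a::euclidean_space set"
  assumes "porous \<alpha> T S" "S \<noteq> {}" "0 < \<alpha>" "\<alpha> \<le> 1"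
    and "0 < r" "r \<le> 1" "0 < \<rho>" "\<rho> < 4 * T"
  defines "q \<equiv> 1 + (\<alpha> / 4) ^ DIM('a)"
  shows "measure lborel (thickening S (r * \<rho>) \<inter> ball z \<rho>)
           \<le> 3 ^ DIM('a) * q * r powr log (8 / \<alpha>) q * measure lborel (ball (0::'a) \<rho>)"
proof -
  have "measure lborel (thickening S (r * \<rho>) \<inter> ball z \<rho>)
          \<le> q * r powr log (1 / (\<alpha> / 8)) q * measure lborel (ball z (3 * \<rho>))"
  proof (rule power_law_of_geometric_decay)
    show "0 < \<alpha> / 8" "\<alpha> / 8 < 1" "1 \<le> q"
      using assms(3,4) by (simp_all add: q_def)
  next
    fix k assume "r \<le> (\<alpha> / 8) ^ k"
    then have "q ^ k * measure lborel (thickening S (r * \<rho>) \<inter> ball z \<rho>)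
        \<le> q ^ k * measure lborel (thickening S ((\<alpha> / 8) ^ k * \<rho>) \<inter> ball z \<rho>)"
      using assms(3,7) by (intro mult_left_mono measure_thickening_Int_ball_mono) (simp_all add: q_def)
    also have "\<dots> \<le> measure lborel (thickening S \<rho> \<inter> ball z (\<rho> + 2 * \<rho>))"
      unfolding q_def by (rule measure_thickening_decay[OF assms(1-4,7,8)])
    also have "\<dots> \<le> measure lborel (ball z (3 * \<rho>))"
      by (intro measure_mono_fmeasurable fmeasurableD[OF fmeasurable_thickening_Int_ball])
        (auto intro: fmeasurable_lborel_ball)
    finally show "q ^ k * measure lborel (thickening S (r * \<rho>) \<inter> ball z \<rho>)
        \<le> measure lborel (ball z (3 * \<rho>))" .
  qed (use assms(5,6) in auto)
  also have "measure lborel (ball z (3 * \<rho>)) = 3 ^ DIM('a) * measure lborel (ball (0::'a) \<rho>)"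
    using content_ball_mult[of 3 \<rho> z] assms(7) by simp
  finally show ?thesis
    by (simp add: mult_ac)
qed

lemma measure_d_Omega_strip_le:
  fixes \<Omega> :: "'a::euclidean_space set"
  shows "measure lebesgue ({x. 0 < d_Omega \<Omega> x \<and> d_Omega \<Omega> x < a} \<inter> ball z \<rho>)
           \<le> measure lborel (thickening (frontier \<Omega>) a \<inter> ball z \<rho>)"
proof -
  define E where "E = {x. 0 < d_Omega \<Omega> x \<and> d_Omega \<Omega> x < a}"
  have "E \<subseteq> thickening (frontier \<Omega>) a"
  proof
    fix x assume "x \<in> E"
    then have "0 < infdist x (- \<Omega>)" "infdist x (- \<Omega>) < a"
      by (simp_all add: E_def d_Omega_def)
    moreover from this(1) have "x \<in> \<Omega>"
      by (metis ComplI infdist_zero less_irrefl)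
    ultimately show "x \<in> thickening (frontier \<Omega>) a"
      using infdist_frontier_le_infdist_compl[of x \<Omega>] by (simp add: thickening_def)
  qed
  moreover have "open E"
    unfolding E_def d_Omega_def by (intro open_Collect_conj open_Collect_less continuous_intros)
  ultimately show ?thesis
    unfolding E_def[symmetric]
    by (auto intro!: measure_mono_fmeasurable fmeasurable_thickening_Int_ball borel_open)
qed

theorem lemma3p1:
  fixes \<kappa> :: real
  assumes "DIM('a::euclidean_space) \<ge> 2" and "0 < \<kappa>"
  shows "\<exists>\<theta> C. 0 < \<theta> \<and> \<theta> < 1 \<and> 0 < C \<and>
    (\<forall>R (\<Omega>::'a set). 0 < R \<longrightarrow> \<kappa> < R \<longrightarrow> open \<Omega> \<longrightarrow> prop_P R \<kappa> \<Omega> \<longrightarrow>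
      (\<forall>z r \<rho>. z \<in> frontier \<Omega> \<longrightarrow> 0 < r \<longrightarrow> r < 1/2 \<longrightarrow> 0 < \<rho> \<longrightarrow> \<rho> < 2 * R \<longrightarrow>
         measure lebesgue ({x. 0 < d_Omega \<Omega> x \<and> d_Omega \<Omega> x < r * \<rho>} \<inter> ball z \<rho>)
           \<le> C * r powr \<theta> * measure lebesgue (ball (0::'a) \<rho>)))"
proof -
  define \<alpha> where "\<alpha> = min \<kappa> 1"
  define q where "q = 1 + (\<alpha> / 4) ^ DIM('a)"
  have \<alpha>: "0 < \<alpha>" "\<alpha> \<le> 1" "\<alpha> \<le> \<kappa>"
    using assms(2) by (auto simp: \<alpha>_def)
  have "1 < q" "q \<le> 2" "1 < 8 / \<alpha>" "8 \<le> 8 / \<alpha>"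
    using \<alpha> by (auto simp: q_def power_le_one field_simps)
  then have \<theta>: "0 < log (8 / \<alpha>) q" "log (8 / \<alpha>) q < 1"
    by simp_all
  have "measure lebesgue ({x. 0 < d_Omega \<Omega> x \<and> d_Omega \<Omega> x < r * \<rho>} \<inter> ball z \<rho>)
          \<le> 3 ^ DIM('a) * q * r powr log (8 / \<alpha>) q * measure lebesgue (ball (0::'a) \<rho>)"
    if "prop_P R \<kappa> \<Omega>" "z \<in> frontier \<Omega>" "0 < r" "r < 1/2" "0 < \<rho>" "\<rho> < 2 * R"
    for R and \<Omega> :: "'a set" and z r \<rho>
  proof -
    have "porous \<alpha> R (frontier \<Omega>)"
      using porous_frontier_if_prop_P[OF that(1)] \<open>\<alpha> \<le> \<kappa>\<close> by (rule porous_mono)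
    then have "measure lborel (thickening (frontier \<Omega>) (r * \<rho>) \<inter> ball z \<rho>)
        \<le> 3 ^ DIM('a) * q * r powr log (8 / \<alpha>) q * measure lborel (ball (0::'a) \<rho>)"
      unfolding q_def using that \<alpha> by (intro measure_thickening_Int_ball_power_law) auto
    then show ?thesis
      using measure_d_Omega_strip_le[of \<Omega> "r * \<rho>" z \<rho>] by simp
  qed
  moreover have "0 < 3 ^ DIM('a) * q"
    using \<open>1 < q\<close> by simp
  ultimately show ?thesis
    using \<theta> by blast
qed

end
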